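(* Let $\mathbf{c}\in\mathbb{R}^n_{\ge0}$, $0<r\le1$ with $\|\mathbf{c}\|_1\le r$, let $0<\delta\le1$ and $M=\lceil 4n^2\delta^{-1}\rceil$. Then $$\Psi_n(1,r)\le G_n(1,r)\le(1+\delta)\Psi_n(1,r).$$
   Context: Given $\mathbf{c}=(c_1,\dots,c_n)$, define $\Psi_0(u,v)=1$ if $u\ge0$ and $v\ge0$, and $0$ otherwise, and for $i=1,\dots,n$, $\Psi_i(u,v)=\int_{-1}^1\Psi_{i-1}(u-|s|,\,v-|s-c_i|)\,ds$. Given additionally $r>0$ and a positive integer $M$, define $G_0=\Psi_0$ and, inductively for $i=1,\dots,n$: $\overline G_i(u,v)=\int_{-1}^1G_{i-1}(u-|s|,\,v-|s-c_i|)\,ds$, and $G_i(u,v)=\overline G_i\big(\tfrac1M\lceil Mu\rceil,\ \tfrac rM\lceil \tfrac Mr v\rceil\big)$ if $u>0$ and $v>0$, while $G_i(u,v)=0$ otherwise (a staircase approximation of $\overline G_i$ on the grid $\tfrac1M\mathbb{Z}\times\tfrac rM\mathbb{Z}$). *)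

theory Defs
  imports "HOL-Analysis.Analysis"
begin

text \<open>The vector c = (c_1,...,c_n) is represented by a function c :: nat => real,
  of which only the values c 1, ..., c n are used.\<close>

fun Psi :: "(nat \<Rightarrow> real) \<Rightarrow> nat \<Rightarrow> real \<Rightarrow> real \<Rightarrow> real" where
  "Psi c 0 u v = (if u \<ge> 0 \<and> v \<ge> 0 then 1 else 0)"
| "Psi c (Suc i) u v =
     integral {-1..1} (\<lambda>s. Psi c i (u - \<bar>s\<bar>) (v - \<bar>s - c (Suc i)\<bar>))"

fun G :: "(nat \<Rightarrow> real) \<Rightarrow> real \<Rightarrow> nat \<Rightarrow> nat \<Rightarrow> real \<Rightarrow> real \<Rightarrow> real" where
  "G c r M 0 u v = Psi c 0 u v"
| "G c r M (Suc i) u v =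
     (if u > 0 \<and> v > 0 then
        (let u' = of_int \<lceil>real M * u\<rceil> / real M;
             v' = r / real M * of_int \<lceil>real M / r * v\<rceil>
         in integral {-1..1} (\<lambda>s. G c r M i (u' - \<bar>s\<bar>) (v' - \<bar>s - c (Suc i)\<bar>)))
      else 0)"

end

theory Submission
  imports Defs
begin

text \<open>Since \<open>\<Psi>\<^sub>i\<close> is monotone in both arguments and rounding up only increases them,
  \<open>\<Psi>\<^sub>n \<le> G\<^sub>n\<close>; as each rounding moves the arguments by at most \<open>1/M\<close> and \<open>r/M\<close>,
  also \<open>G\<^sub>n(u, v) \<le> \<Psi>\<^sub>n(u + n/M, v + nr/M)\<close>. The substitution \<open>s \<mapsto> s/\<mu> + q\<close> in each of the
  \<open>n\<close> integrals shows that enlarging the arguments of \<open>\<Psi>\<^sub>n\<close> in this way costs at most a factor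
  \<open>\<mu>\<^sup>n\<close> with \<open>\<mu> = 1 + 2n/M\<close>, and \<open>(1 + 2n/M)\<^sup>n \<le> 1 + 4n\<^sup>2/M \<le> 1 + \<delta>\<close>.\<close>

definition bounded_borel2 :: "(real \<Rightarrow> real \<Rightarrow> real) \<Rightarrow> bool" where
  "bounded_borel2 F \<longleftrightarrow> (\<lambda>(x, y). F x y) \<in> borel_measurable borel \<and> (\<exists>K. \<forall>x y. \<bar>F x y\<bar> \<le> K)"

lemma bounded_borel2_compose:
  assumes "bounded_borel2 F" and "g \<in> borel_measurable N" and "h \<in> borel_measurable N"
  shows "(\<lambda>s. F (g s) (h s)) \<in> borel_measurable N"
proof -
  have "(\<lambda>s. (g s, h s)) \<in> measurable N borel"
    using assms(2,3) by (simp add: borel_prod[symmetric])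
  then have "(\<lambda>s. (\<lambda>(x, y). F x y) (g s, h s)) \<in> borel_measurable N"
    by (rule measurable_compose) (use assms(1) in \<open>simp add: bounded_borel2_def\<close>)
  then show ?thesis by simp
qed

lemma bounded_borel2_set_integrable:
  assumes "bounded_borel2 F" and "g \<in> borel_measurable borel" and "h \<in> borel_measurable borel"
  shows "set_integrable lborel {a..b::real} (\<lambda>s. F (g s) (h s))"
proof -
  obtain K where "\<forall>x y. \<bar>F x y\<bar> \<le> K" using assms(1) by (auto simp: bounded_borel2_def)
  moreover have "(\<lambda>s. F (g s) (h s)) \<in> borel_measurable lborel"
    using bounded_borel2_compose[OF assms] by simp
  ultimately show ?thesis unfolding set_integrable_def
    by (intro integrableI_bounded_set[where A="{a..b}" and B=K])
      (auto simp: indicator_def emeasure_lborel_Icc_eq)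
qed

lemmas bounded_borel2_integrable_on = set_borel_integral_eq_integral(1)[OF bounded_borel2_set_integrable]
lemmas bounded_borel2_integral_eq = set_borel_integral_eq_integral(2)[OF bounded_borel2_set_integrable]

definition conv_step :: "(real \<Rightarrow> real \<Rightarrow> real) \<Rightarrow> real \<Rightarrow> real \<Rightarrow> real \<Rightarrow> real" where
  "conv_step F a u v = integral {-1..1} (\<lambda>s. F (u - \<bar>s\<bar>) (v - \<bar>s - a\<bar>))"

lemma bounded_borel2_conv_step:
  assumes F: "bounded_borel2 F"
  shows "bounded_borel2 (conv_step F a)"
proof -
  obtain K where K: "\<forall>x y. \<bar>F x y\<bar> \<le> K" using F by (auto simp: bounded_borel2_def)
  have "(\<lambda>(z, s). F (fst z - \<bar>s\<bar>) (snd z - \<bar>s - a\<bar>)) \<in> borel_measurable ((borel \<Otimes>\<^sub>M borel) \<Otimes>\<^sub>M borel)"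
    unfolding case_prod_beta' by (intro bounded_borel2_compose[OF F]) measurable
  then have "(\<lambda>(z, s). F (fst z - \<bar>s\<bar>) (snd z - \<bar>s - a\<bar>)) \<in> borel_measurable ((borel \<Otimes>\<^sub>M borel) \<Otimes>\<^sub>M lborel)"
    by (subst measurable_cong_sets[OF sets_pair_measure_cong[OF refl sets_lborel] refl])
  then have "(\<lambda>z. LINT s:{-1..1}|lborel. F (fst z - \<bar>s\<bar>) (snd z - \<bar>s - a\<bar>)) \<in> borel_measurable (borel \<Otimes>\<^sub>M borel)"
    unfolding set_lebesgue_integral_def
    by (intro lborel.borel_measurable_lebesgue_integral) (simp add: case_prod_beta')
  then have "(\<lambda>(u, v). conv_step F a u v) \<in> borel_measurable borel"
    by (simp add: conv_step_def case_prod_beta' bounded_borel2_integral_eq[OF F] borel_prod)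
  moreover have "\<bar>conv_step F a u v\<bar> \<le> 2 * K" for u v
  proof -
    have "norm (conv_step F a u v) \<le> integral {-1..1::real} (\<lambda>s. K)"
      unfolding conv_step_def
      by (intro integral_norm_bound_integral bounded_borel2_integrable_on[OF F]) (use K in auto)
    then show ?thesis by simp
  qed
  ultimately show ?thesis by (auto simp: bounded_borel2_def)
qed

lemma conv_step_integrand_integrable:
  assumes "bounded_borel2 F"
  shows "(\<lambda>s. F (u - \<bar>s\<bar>) (v - \<bar>s - a\<bar>)) integrable_on {x..y}"
  by (rule bounded_borel2_integrable_on[OF assms]) auto

lemma conv_step_le:
  assumes "bounded_borel2 F" "bounded_borel2 F'"
    and "\<And>s. s \<in> {-1..1} \<Longrightarrow> F (u - \<bar>s\<bar>) (v - \<bar>s - a\<bar>) \<le> F' (u' - \<bar>s\<bar>) (v' - \<bar>s - a\<bar>)"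
  shows "conv_step F a u v \<le> conv_step F' a u' v'"
  unfolding conv_step_def
  by (intro integral_le conv_step_integrand_integrable assms)

lemma conv_step_nonneg:
  assumes "bounded_borel2 F" "\<And>x y. 0 \<le> F x y"
  shows "0 \<le> conv_step F a u v"
  unfolding conv_step_def
  by (intro integral_nonneg conv_step_integrand_integrable assms)

lemma Psi_Suc_conv_step: "Psi c (Suc i) = conv_step (Psi c i) (c (Suc i))"
  by (simp add: fun_eq_iff conv_step_def)

declare Psi.simps(2) [simp del]

lemma bounded_borel2_Psi: "bounded_borel2 (Psi c i)"
proof (induction i)
  case 0
  have "(\<lambda>z :: real \<times> real. if 0 \<le> fst z \<and> 0 \<le> snd z then 1 else 0 :: real) \<in> borel_measurable (borel \<Otimes>\<^sub>M borel)"
    by measurable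
  then show ?case by (auto simp: bounded_borel2_def borel_prod case_prod_beta' intro!: exI[of _ 1])
next
  case (Suc i)
  then show ?case by (simp add: Psi_Suc_conv_step bounded_borel2_conv_step)
qed

lemma Psi_nonneg: "0 \<le> Psi c i x y"
proof (induction i arbitrary: x y)
  case (Suc i)
  then show ?case by (simp add: Psi_Suc_conv_step conv_step_nonneg bounded_borel2_Psi)
qed simp

lemma Psi_eq_0_if_neg: "x < 0 \<or> y < 0 \<Longrightarrow> Psi c i x y = 0"
proof (induction i arbitrary: x y)
  case (Suc i)
  then have "\<And>s. Psi c i (x - \<bar>s\<bar>) (y - \<bar>s - c (Suc i)\<bar>) = 0" by (intro Suc.IH) auto
  then show ?case by (simp add: Psi_Suc_conv_step conv_step_def)
qed auto

text \<open>Unlike \<open>\<Psi>\<^sub>0\<close>, \<open>\<Psi>\<^sub>i\<^sub>+\<^sub>1\<close> vanishes on the boundary of the quadrant (the integrand is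
  supported in at most two points there), matching the strict inequalities in the definition of \<open>G\<close>.\<close>

lemma Psi_Suc_eq_0:
  assumes "\<not> (0 < x \<and> 0 < y)"
  shows "Psi c (Suc i) x y = 0"
proof -
  have vanish: "Psi c i (x - \<bar>s\<bar>) (y - \<bar>s - c (Suc i)\<bar>) = 0" if "s \<notin> {0, c (Suc i)}" for s
    using that assms by (intro Psi_eq_0_if_neg) auto
  have "integral {-1..1} (\<lambda>s::real. 0) = integral {-1..1} (\<lambda>s. Psi c i (x - \<bar>s\<bar>) (y - \<bar>s - c (Suc i)\<bar>))"
    by (rule integral_spike[of "{0, c (Suc i)}"]) (auto simp: vanish)
  then show ?thesis by (simp add: Psi_Suc_conv_step conv_step_def)
qed

lemma Psi_mono: "x \<le> x' \<Longrightarrow> y \<le> y' \<Longrightarrow> Psi c i x y \<le> Psi c i x' y'"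
proof (induction i arbitrary: x y x' y')
  case (Suc i)
  then show ?case by (simp add: Psi_Suc_conv_step conv_step_le bounded_borel2_Psi)
qed auto

definition grid_ceiling :: "real \<Rightarrow> real \<Rightarrow> real" where
  "grid_ceiling h x = h * of_int \<lceil>x / h\<rceil>"

lemma grid_ceiling_bounds:
  assumes "0 < h"
  shows "x \<le> grid_ceiling h x" "grid_ceiling h x \<le> x + h"
proof -
  have "h * (x / h) \<le> h * of_int \<lceil>x / h\<rceil>" "h * of_int \<lceil>x / h\<rceil> \<le> h * (x / h + 1)"
    using assms by (intro mult_left_mono; linarith)+
  then show "x \<le> grid_ceiling h x" "grid_ceiling h x \<le> x + h"
    using assms by (simp_all add: grid_ceiling_def distrib_left)
qed

lemma G_Suc_conv_step:
  "G c r M (Suc i) u v =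
     (if 0 < u \<and> 0 < v
      then conv_step (G c r M i) (c (Suc i)) (grid_ceiling (1 / real M) u) (grid_ceiling (r / real M) v)
      else 0)"
  by (simp add: Let_def conv_step_def grid_ceiling_def mult.commute)

declare G.simps(2) [simp del]

lemma bounded_borel2_G: "bounded_borel2 (G c r M i)"
proof (induction i)
  case 0
  have "G c r M 0 = Psi c 0" by (simp add: fun_eq_iff)
  then show ?case using bounded_borel2_Psi by metis
next
  case (Suc i)
  let ?F = "conv_step (G c r M i) (c (Suc i))"
  have F: "bounded_borel2 ?F" using Suc by (rule bounded_borel2_conv_step)
  then obtain K where K: "\<forall>x y. \<bar>?F x y\<bar> \<le> K" by (auto simp: bounded_borel2_def)
  have [measurable]: "(\<lambda>z. ?F (grid_ceiling (1 / real M) (fst z)) (grid_ceiling (r / real M) (snd z)))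
      \<in> borel_measurable (borel \<Otimes>\<^sub>M borel)"
    unfolding grid_ceiling_def by (intro bounded_borel2_compose[OF F]) measurable
  have "(\<lambda>z. if 0 < fst z \<and> 0 < snd z
      then ?F (grid_ceiling (1 / real M) (fst z)) (grid_ceiling (r / real M) (snd z)) else 0)
      \<in> borel_measurable (borel \<Otimes>\<^sub>M borel)"
    by measurable
  then have "(\<lambda>(x, y). G c r M (Suc i) x y) \<in> borel_measurable borel"
    by (simp add: G_Suc_conv_step case_prod_beta' borel_prod)
  moreover have "\<bar>G c r M (Suc i) x y\<bar> \<le> max K 0" for x y
    using K by (auto simp: G_Suc_conv_step le_max_iff_disj)
  ultimately show ?case unfolding bounded_borel2_def by blast
qed

lemma Psi_le_G:
  assumes "0 < M" "0 < r"
  shows "Psi c i u v \<le> G c r M i u v"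
proof (induction i arbitrary: u v)
  case (Suc i)
  show ?case
  proof (cases "0 < u \<and> 0 < v")
    case True
    let ?u = "grid_ceiling (1 / real M) u" and ?v = "grid_ceiling (r / real M) v"
    have "Psi c (Suc i) u v \<le> Psi c (Suc i) ?u ?v"
      using assms by (intro Psi_mono grid_ceiling_bounds) auto
    also have "\<dots> \<le> conv_step (G c r M i) (c (Suc i)) ?u ?v"
      unfolding Psi_Suc_conv_step by (intro conv_step_le bounded_borel2_Psi bounded_borel2_G Suc)
    also have "\<dots> = G c r M (Suc i) u v"
      using True by (simp add: G_Suc_conv_step)
    finally show ?thesis .
  next
    case False
    then show ?thesis by (simp only: Psi_Suc_eq_0[OF False] G_Suc_conv_step if_False order.refl)
  qed
qed simp

lemma G_le_Psi_shifted:
  assumes "0 < M" "0 < r"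
  shows "G c r M i u v \<le> Psi c i (u + real i / real M) (v + real i * r / real M)"
proof (induction i arbitrary: u v)
  case (Suc i)
  show ?case
  proof (cases "0 < u \<and> 0 < v")
    case True
    let ?u = "grid_ceiling (1 / real M) u" and ?v = "grid_ceiling (r / real M) v"
    have "G c r M (Suc i) u v = conv_step (G c r M i) (c (Suc i)) ?u ?v"
      using True by (simp add: G_Suc_conv_step)
    also have "\<dots> \<le> Psi c (Suc i) (?u + real i / real M) (?v + real i * r / real M)"
      unfolding Psi_Suc_conv_step
      by (intro conv_step_le bounded_borel2_Psi bounded_borel2_G order.trans[OF Suc])
        (simp add: algebra_simps)
    also have "\<dots> \<le> Psi c (Suc i) (u + real (Suc i) / real M) (v + real (Suc i) * r / real M)"
      using grid_ceiling_bounds(2)[of "1 / real M" u] grid_ceiling_bounds(2)[of "r / real M" v] assms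
      by (intro Psi_mono) (auto simp: add_divide_distrib distrib_right)
    finally show ?thesis .
  next
    case False
    then show ?thesis by (auto simp: G_Suc_conv_step Psi_nonneg)
  qed
qed simp

lemma integral_dilate_le:
  fixes f :: "real \<Rightarrow> real"
  assumes mu: "1 \<le> \<mu>" and q: "\<bar>q\<bar> \<le> 1 - 1 / \<mu>"
    and int_dilated: "(\<lambda>s. f (s / \<mu> + q)) integrable_on {-1..1}"
    and int: "f integrable_on {-1..1}" and nonneg: "\<And>x. 0 \<le> f x"
  shows "integral {-1..1} (\<lambda>s. f (s / \<mu> + q)) \<le> \<mu> * integral {-1..1} f"
proof -
  let ?J = "integral {-1..1} (\<lambda>s. f (s / \<mu> + q))"
  let ?S = "(\<lambda>x. x / \<mu> + q) ` {-1..1}"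
  have "((\<lambda>s. f (s / \<mu> + q)) has_integral ?J) (cbox (-1) 1)"
    using int_dilated by (simp add: integrable_integral)
  from has_integral_affinity[OF this, of \<mu> "- \<mu> * q"] mu
  have "((\<lambda>x. f ((\<mu> * x - \<mu> * q) / \<mu> + q)) has_integral (1 / \<mu>) * ?J) ?S"
    by (simp add: image_image field_simps)
  moreover have "(\<lambda>x. f ((\<mu> * x - \<mu> * q) / \<mu> + q)) = f"
    using mu by (simp add: fun_eq_iff field_simps)
  ultimately have S: "(f has_integral (1 / \<mu>) * ?J) ?S" by simp
  have "?S \<subseteq> {-1..1}"
  proof
    fix y assume "y \<in> ?S"
    then obtain x where x: "x \<in> {-1..1}" and y: "y = x / \<mu> + q" by auto
    have "\<bar>x / \<mu>\<bar> \<le> 1 / \<mu>" using x mu by (auto simp: divide_right_mono)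
    then have "\<bar>y\<bar> \<le> 1" using q y by linarith
    then show "y \<in> {-1..1}" by auto
  qed
  then have "(1 / \<mu>) * ?J \<le> integral {-1..1} f"
    using integral_subset_le[of ?S "{-1..1}" f] S int nonneg by (auto simp: integral_unique)
  then show ?thesis using mu by (simp add: field_simps)
qed

text \<open>The substitution \<open>t = s/\<mu> + q\<close> with \<open>q = (1 - 1/\<mu>) a/2\<close> maps \<open>[-1, 1]\<close> into itself
  (for \<open>|a| \<le> 2\<close>) and shrinks both \<open>|s|\<close> and \<open>|s - a|\<close> by the factor \<open>\<mu>\<close>, up to an
  additive error \<open>(1 - 1/\<mu>) |a|/2\<close>.\<close>

lemma abs_dilate_shift_le:
  fixes s a \<mu> :: real
  assumes "1 \<le> \<mu>"
  defines "q \<equiv> (1 - 1 / \<mu>) * (a / 2)"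
  shows "\<bar>s / \<mu> + q\<bar> \<le> \<bar>s\<bar> / \<mu> + (1 - 1 / \<mu>) * (\<bar>a\<bar> / 2)"
    and "\<bar>s / \<mu> + q - a\<bar> \<le> \<bar>s - a\<bar> / \<mu> + (1 - 1 / \<mu>) * (\<bar>a\<bar> / 2)"
proof -
  have abs_q: "\<bar>q\<bar> = (1 - 1 / \<mu>) * (\<bar>a\<bar> / 2)"
    using assms by (simp add: q_def abs_mult)
  have "\<bar>s / \<mu> + q\<bar> \<le> \<bar>s / \<mu>\<bar> + \<bar>q\<bar>" by (rule abs_triangle_ineq)
  then show "\<bar>s / \<mu> + q\<bar> \<le> \<bar>s\<bar> / \<mu> + (1 - 1 / \<mu>) * (\<bar>a\<bar> / 2)"
    using assms(1) by (simp add: abs_q)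
  have "s / \<mu> + q - a = (s - a) / \<mu> - q"
    using assms(1) by (simp add: q_def field_simps)
  moreover have "\<bar>(s - a) / \<mu> - q\<bar> \<le> \<bar>(s - a) / \<mu>\<bar> + \<bar>q\<bar>" by (rule abs_triangle_ineq4)
  ultimately show "\<bar>s / \<mu> + q - a\<bar> \<le> \<bar>s - a\<bar> / \<mu> + (1 - 1 / \<mu>) * (\<bar>a\<bar> / 2)"
    using assms(1) by (simp add: abs_q)
qed

lemma conv_step_dilate:
  assumes mu: "1 \<le> \<mu>" and a: "\<bar>a\<bar> \<le> 2" and K: "0 \<le> K"
    and F: "bounded_borel2 F" "\<And>x y. 0 \<le> F x y"
    and dilate: "\<And>U V U' V'. \<alpha> + U / \<mu> \<le> U' \<Longrightarrow> \<alpha> + V / \<mu> \<le> V' \<Longrightarrow> F U V \<le> K * F U' V'"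
    and U': "\<alpha> + (1 - 1 / \<mu>) * (\<bar>a\<bar> / 2) + U / \<mu> \<le> U'"
    and V': "\<alpha> + (1 - 1 / \<mu>) * (\<bar>a\<bar> / 2) + V / \<mu> \<le> V'"
  shows "conv_step F a U V \<le> K * \<mu> * conv_step F a U' V'"
proof -
  define q where "q = (1 - 1 / \<mu>) * (a / 2)"
  let ?f = "\<lambda>t. F (U' - \<bar>t\<bar>) (V' - \<bar>t - a\<bar>)"
  have q: "\<bar>q\<bar> \<le> 1 - 1 / \<mu>"
  proof -
    have "\<bar>q\<bar> = (1 - 1 / \<mu>) * (\<bar>a\<bar> / 2)" using mu by (simp add: q_def abs_mult)
    also have "\<dots> \<le> (1 - 1 / \<mu>) * 1" using mu a by (intro mult_left_mono) auto
    finally show ?thesis by simp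
  qed
  have pointwise: "F (U - \<bar>s\<bar>) (V - \<bar>s - a\<bar>) \<le> K * ?f (s / \<mu> + q)" for s
  proof (rule dilate)
    show "\<alpha> + (U - \<bar>s\<bar>) / \<mu> \<le> U' - \<bar>s / \<mu> + q\<bar>"
      using U' abs_dilate_shift_le(1)[OF mu, of s a] by (simp add: q_def diff_divide_distrib)
    show "\<alpha> + (V - \<bar>s - a\<bar>) / \<mu> \<le> V' - \<bar>s / \<mu> + q - a\<bar>"
      using V' abs_dilate_shift_le(2)[OF mu, of s a] by (simp add: q_def diff_divide_distrib)
  qed
  have int_dilated: "(\<lambda>s. ?f (s / \<mu> + q)) integrable_on {-1..1}"
    by (rule bounded_borel2_integrable_on[OF F(1)]) auto
  then have "(\<lambda>s. K * ?f (s / \<mu> + q)) integrable_on {-1..1}"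
    by (rule integrable_on_mult_right)
  then have "conv_step F a U V \<le> integral {-1..1} (\<lambda>s. K * ?f (s / \<mu> + q))"
    unfolding conv_step_def by (intro integral_le conv_step_integrand_integrable F(1) pointwise)
  also have "\<dots> = K * integral {-1..1} (\<lambda>s. ?f (s / \<mu> + q))"
    by simp
  also have "\<dots> \<le> K * (\<mu> * integral {-1..1} ?f)"
    by (intro mult_left_mono integral_dilate_le mu q int_dilated conv_step_integrand_integrable F K)
  finally show ?thesis by (simp add: conv_step_def mult.assoc)
qed

lemma Psi_dilate:
  assumes mu: "1 \<le> \<mu>" and c: "\<forall>j\<in>{1..i}. \<bar>c j\<bar> \<le> 2"
    and "(1 - 1 / \<mu>) * (\<Sum>j=1..i. \<bar>c j\<bar> / 2) + U / \<mu> \<le> U'"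
    and "(1 - 1 / \<mu>) * (\<Sum>j=1..i. \<bar>c j\<bar> / 2) + V / \<mu> \<le> V'"
  shows "Psi c i U V \<le> \<mu> ^ i * Psi c i U' V'"
  using c assms(3,4)
proof (induction i arbitrary: U V U' V')
  case 0
  have "0 \<le> U \<Longrightarrow> 0 \<le> U / \<mu>" "0 \<le> V \<Longrightarrow> 0 \<le> V / \<mu>"
    using mu by simp_all
  with 0 show ?case by auto
next
  case (Suc i)
  have sum: "(1 - 1 / \<mu>) * (\<Sum>j=1..Suc i. \<bar>c j\<bar> / 2)
      = (1 - 1 / \<mu>) * (\<Sum>j=1..i. \<bar>c j\<bar> / 2) + (1 - 1 / \<mu>) * (\<bar>c (Suc i)\<bar> / 2)"
    by (simp add: distrib_left)
  have "Psi c (Suc i) U V \<le> \<mu> ^ i * \<mu> * Psi c (Suc i) U' V'"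
    unfolding Psi_Suc_conv_step
  proof (rule conv_step_dilate[OF mu _ _ bounded_borel2_Psi Psi_nonneg])
    show "\<bar>c (Suc i)\<bar> \<le> 2" using Suc.prems(1) by simp
    show "(1 - 1 / \<mu>) * (\<Sum>j=1..i. \<bar>c j\<bar> / 2) + U / \<mu> \<le> U'
      \<Longrightarrow> (1 - 1 / \<mu>) * (\<Sum>j=1..i. \<bar>c j\<bar> / 2) + V / \<mu> \<le> V'
      \<Longrightarrow> Psi c i U V \<le> \<mu> ^ i * Psi c i U' V'" for U V U' V'
      using Suc.prems(1) by (intro Suc.IH) auto
  qed (use mu Suc.prems(2,3) sum in auto)
  then show ?case by (simp add: mult.commute)
qed

lemma G_le_power_Psi:
  assumes "0 < M" "0 < r"
    and sum_le_2: "(\<Sum>j=1..n. \<bar>c j\<bar>) \<le> 2"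
    and u: "(\<Sum>j=1..n. \<bar>c j\<bar>) + 1 \<le> 2 * u"
    and v: "(\<Sum>j=1..n. \<bar>c j\<bar>) + r \<le> 2 * v"
  shows "G c r M n u v \<le> (1 + 2 * real n / real M) ^ n * Psi c n u v"
proof -
  define x where "x = real n / real M"
  define S where "S = (\<Sum>j=1..n. \<bar>c j\<bar>)"
  have x: "0 \<le> x" by (simp add: x_def)
  have half_sum: "(\<Sum>j=1..n. \<bar>c j\<bar> / 2) = S / 2"
    by (simp add: S_def sum_divide_distrib)
  have scaled_le: "(1 - 1 / (1 + 2 * x)) * (\<Sum>j=1..n. \<bar>c j\<bar> / 2) + (w + x * t) / (1 + 2 * x) \<le> w"
    if "S + t \<le> 2 * w" for w t
  proof -
    have "(1 - 1 / (1 + 2 * x)) * (S / 2) + (w + x * t) / (1 + 2 * x) = (w + x * (S + t)) / (1 + 2 * x)"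
      using x by (simp add: divide_simps) (simp add: algebra_simps)
    also have "\<dots> \<le> (w + x * (2 * w)) / (1 + 2 * x)"
      using x that by (intro divide_right_mono add_left_mono mult_left_mono) auto
    also have "\<dots> = w"
      using x by (simp add: divide_simps) (simp add: algebra_simps)
    finally show ?thesis unfolding half_sum .
  qed
  have "G c r M n u v \<le> Psi c n (u + x) (v + x * r)"
    using G_le_Psi_shifted[OF assms(1,2), of c n u v] by (simp add: x_def)
  also have "\<dots> \<le> (1 + 2 * x) ^ n * Psi c n u v"
  proof (rule Psi_dilate)
    show "\<forall>j\<in>{1..n}. \<bar>c j\<bar> \<le> 2"
      using order.trans[OF member_le_sum sum_le_2] by auto
    show "(1 - 1 / (1 + 2 * x)) * (\<Sum>j=1..n. \<bar>c j\<bar> / 2) + (u + x) / (1 + 2 * x) \<le> u"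
      using scaled_le[of 1 u] u by (simp add: S_def)
    show "(1 - 1 / (1 + 2 * x)) * (\<Sum>j=1..n. \<bar>c j\<bar> / 2) + (v + x * r) / (1 + 2 * x) \<le> v"
      using scaled_le[of r v] v by (simp add: S_def)
  qed (use x in simp)
  finally show ?thesis by (simp add: x_def)
qed

lemma one_plus_power_le:
  fixes a :: real
  assumes "0 \<le> a" "real k * a \<le> 1 / 2"
  shows "(1 + a) ^ k \<le> 1 + 2 * real k * a"
  using assms(2)
proof (induction k)
  case (Suc k)
  then have ka: "real k * a \<le> 1 / 2" using assms(1) by (simp add: algebra_simps)
  have "(1 + a) ^ Suc k \<le> (1 + a) * (1 + 2 * real k * a)"
    using Suc.IH[OF ka] assms(1) by (simp add: mult_left_mono)
  also have "\<dots> = 1 + (2 * real k + 1) * a + 2 * (real k * a) * a" by (simp add: algebra_simps)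
  also have "\<dots> \<le> 1 + (2 * real k + 1) * a + a"
    using mult_right_mono[OF ka assms(1)] by simp
  finally show ?case by (simp add: algebra_simps)
qed simp

theorem mainTheorem18:
  fixes c :: "nat \<Rightarrow> real" and n :: nat and r \<delta> :: real and M :: nat
  assumes "\<forall>i\<in>{1..n}. c i \<ge> 0"
    and "0 < r" and "r \<le> 1"
    and "(\<Sum>i=1..n. \<bar>c i\<bar>) \<le> r"
    and "0 < \<delta>" and "\<delta> \<le> 1"
    and "M = nat \<lceil>4 * real n ^ 2 / \<delta>\<rceil>"
  shows "Psi c n 1 r \<le> G c r M n 1 r \<and> G c r M n 1 r \<le> (1 + \<delta>) * Psi c n 1 r"
proof (cases "n = 0")
  case False
  have M_bound: "4 * real n ^ 2 / \<delta> \<le> real M"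
    using assms(7) by linarith
  moreover have "0 < 4 * real n ^ 2 / \<delta>"
    using assms(5) False by simp
  ultimately have M: "0 < M" by linarith
  have "4 * real n ^ 2 \<le> \<delta> * real M"
    using M_bound assms(5) by (simp add: field_simps)
  then have "real n * (2 * real n / real M) \<le> \<delta> / 2"
    using M by (simp add: field_simps power2_eq_square)
  then have "(1 + 2 * real n / real M) ^ n \<le> 1 + \<delta>"
    using one_plus_power_le[of "2 * real n / real M" n] assms(6) by simp
  moreover have "G c r M n 1 r \<le> (1 + 2 * real n / real M) ^ n * Psi c n 1 r"
    using assms(2-4) by (intro G_le_power_Psi M) auto
  ultimately have "G c r M n 1 r \<le> (1 + \<delta>) * Psi c n 1 r"
    by (meson Psi_nonneg mult_right_mono order.trans)
  then show ?thesis using Psi_le_G[OF M assms(2)] by simp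
qed (use assms(2,5) in simp)

end
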